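(* For all $n,m,l\in\mathbb{N}_0$ with $l\le n$ and $l\le m$, and all $x,y\in[0,1]$, $$\frac{1}{\bigl([x]_q+[1-x]_q\bigr)^{n-l}\bigl([y]_q+[1-y]_q\bigr)^{m-l}}\sum_{k=l}^{n}\sum_{j=l}^{m}\frac{\binom{k}{l}\binom{j}{l}}{\binom{n}{l}\binom{m}{l}}B_{k,j;n,m}(x,y;q)$$ $$=\sum_{k=0}^{l}\sum_{j=0}^{l}q^{\binom{k}{2}+\binom{j}{2}}\binom{x}{k}_q\binom{y}{j}_q[k]_q!\,[j]_q!\,S(l,k;q)\,S(l,j;q).$$
   Context: Fix $q\in(0,1)$. For real $x$ put $[x]_q=\frac{1-q^x}{1-q}$. For $k,j,n,m\in\mathbb{Z}$ and $x,y\in[0,1]$, the modified $q$-Bernstein polynomial of two variables is $B_{k,j;n,m}(x,y;q)=\binom{n}{k}\binom{m}{j}[x]_q^k[y]_q^j[1-x]_q^{n-k}[1-y]_q^{m-j}$ if $0\le k\le n$ and $0\le j\le m$, and $B_{k,j;n,m}(x,y;q)=0$ otherwise. For $k\in\mathbb{N}_0$, $[k]_q!=[1]_q[2]_q\cdots[k]_q$ with $[0]_q!=1$. For real $x$ and $k\in\mathbb{N}_0$, $\binom{x}{k}_q=\frac{[x]_q[x-1]_q\cdots[x-k+1]_q}{[k]_q!}$ (equal to $1$ for $k=0$); for integers $0\le i\le k$, $\binom{k}{i}_q=\frac{[k]_q!}{[i]_q![k-i]_q!}$. The $q$-Stirling numbers of the second kind are $S(n,k;q)=\frac{q^{-\binom{k}{2}}}{[k]_q!}\sum_{i=0}^{k}(-1)^i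 q^{\binom{i}{2}}\binom{k}{i}_q[k-i]_q^{\,n}$ for $n,k\in\mathbb{N}_0$, with the convention $0^0=1$. *)

theory Defs
  imports Complex_Main
begin

definition qnum :: "real \<Rightarrow> real \<Rightarrow> real" where
  "qnum q x = (1 - q powr x) / (1 - q)"

definition qfact :: "real \<Rightarrow> nat \<Rightarrow> real" where
  "qfact q k = (\<Prod>i\<in>{1..k}. qnum q (real i))"

definition qbinom_real :: "real \<Rightarrow> real \<Rightarrow> nat \<Rightarrow> real" where
  "qbinom_real q x k = (\<Prod>i\<in>{0..<k}. qnum q (x - real i)) / qfact q k"

definition qbinom :: "real \<Rightarrow> nat \<Rightarrow> nat \<Rightarrow> real" where
  "qbinom q k i = qfact q k / (qfact q i * qfact q (k - i))"

text \<open>q-Stirling numbers of the second kind (0^0 = 1, as for Isabelle's power).\<close>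
definition qstirling :: "real \<Rightarrow> nat \<Rightarrow> nat \<Rightarrow> real" where
  "qstirling q n k = inverse (q ^ (k choose 2)) / qfact q k *
     (\<Sum>i=0..k. (-1) ^ i * q ^ (i choose 2) * qbinom q k i * (qnum q (real (k - i))) ^ n)"

definition qbernstein2 :: "real \<Rightarrow> int \<Rightarrow> int \<Rightarrow> int \<Rightarrow> int \<Rightarrow> real \<Rightarrow> real \<Rightarrow> real" where
  "qbernstein2 q k j n m x y =
     (if 0 \<le> k \<and> k \<le> n \<and> 0 \<le> j \<and> j \<le> m then
        real (nat n choose nat k) * real (nat m choose nat j)
        * qnum q x ^ nat k * qnum q y ^ nat j
        * qnum q (1 - x) ^ nat (n - k) * qnum q (1 - y) ^ nat (m - j)
      else 0)"

end

theory Submission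
  imports Defs
begin

(* Both sides of the identity factor into an x-part times a y-part, so it
   suffices to treat one variable.
   (1) Left side: the Bernstein moment identity
         sum_{k=l..n} C(k,l)/C(n,l) * C(n,k) a^k b^(n-k) = a^l (a+b)^(n-l),
       applied with a = [x]_q, b = [1-x]_q, reduces each factor to [x]_q^l.
   (2) Right side: writing [x]_q^(k) = q^C(k,2) [x]_q [x-1]_q ... [x-k+1]_q for the
       q-falling factorial (which equals q^C(k,2) binom(x,k)_q [k]_q!), the q-analogue
       of the classical expansion of powers into falling factorials holds:
         [x]_q^n = sum_{k=0..n} [x]_q^(k) S(n,k;q).
       It is proved by induction on n from the one-step rule
         [x]_q [x]_q^(k) = [k]_q [x]_q^(k) + [x]_q^(k+1)
       and the triangular recurrence S(n+1,k+1) = S(n,k) + [k+1]_q S(n,k+1), which in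
       turn is derived from the explicit alternating-sum definition of S via the
       q-Pascal rule for Gaussian binomials. *)

lemma choose2_Suc: "Suc j choose 2 = (j choose 2) + j"
  by (simp add: numeral_2_eq_2)

lemma choose2_0: "(0::nat) choose 2 = 0"
  by (simp add: numeral_2_eq_2)

text \<open>Additivity of q-numbers: [x] = [k] + q^k [x-k]; valid for every positive base
  (for q = 1 both sides are 0 by the convention of division by zero).\<close>
lemma qnum_shift:
  assumes "0 < q"
  shows "qnum q x = qnum q (real k) + q ^ k * qnum q (x - real k)"
proof -
  have "q powr x = q powr (real k) * q powr (x - real k)"
    by (simp add: powr_add[symmetric])
  also have "\<dots> = q ^ k * q powr (x - real k)"
    using assms by (simp add: powr_realpow)
  finally have split: "q powr x = q ^ k * q powr (x - real k)" .
  show ?thesis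
    using assms unfolding qnum_def split
    by (cases "q = 1") (simp_all add: powr_realpow field_simps)
qed

lemma qnum_add:
  assumes "0 < q"
  shows "qnum q (real (a + b)) = qnum q (real a) + q ^ a * qnum q (real b)"
  using qnum_shift[OF assms, of "real (a + b)" a] by simp

definition qstirling_numer :: "real \<Rightarrow> nat \<Rightarrow> nat \<Rightarrow> real" where
  "qstirling_numer q n k =
     (\<Sum>i=0..k. (-1) ^ i * q ^ (i choose 2) * qbinom q k i * qnum q (real (k - i)) ^ n)"

definition qfalling :: "real \<Rightarrow> real \<Rightarrow> nat \<Rightarrow> real" where
  "qfalling q x k = q ^ (k choose 2) * qbinom_real q x k * qfact q k"

context
  fixes q :: real
  assumes q_gt0: "0 < q" and q_lt1: "q < 1"
begin

lemma qnum_zero: "qnum q 0 = 0"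
  using q_gt0 by (simp add: qnum_def)

lemma qnum_pos: "0 < x \<Longrightarrow> 0 < qnum q x"
  using q_gt0 q_lt1 powr_less_mono2[of x q 1] by (simp add: qnum_def)

lemma qnum_nonneg: "0 \<le> x \<Longrightarrow> 0 \<le> qnum q x"
  using qnum_pos[of x] by (cases "x = 0") (auto simp: qnum_zero)

lemma qnum_pos_nat: "0 < k \<Longrightarrow> 0 < qnum q (real k)"
  by (simp add: qnum_pos)

lemma qnum_sum_pos:
  assumes "0 \<le> x" "x \<le> 1"
  shows "0 < qnum q x + qnum q (1 - x)"
proof (cases "x = 0")
  case True
  then show ?thesis by (simp add: qnum_zero qnum_pos)
next
  case False
  then show ?thesis
    using assms qnum_pos[of x] qnum_nonneg[of "1 - x"] by simp
qed

lemma qfact_Suc: "qfact q (Suc k) = qfact q k * qnum q (real (Suc k))"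
  by (simp add: qfact_def)

lemma qfact_0: "qfact q 0 = 1"
  by (simp add: qfact_def)

lemma qfact_pos: "0 < qfact q k"
  unfolding qfact_def using qnum_pos_nat by (intro prod_pos) auto

lemma qbinom_0: "qbinom q k 0 = 1"
  using qfact_pos[of k] by (simp add: qbinom_def qfact_0)

lemma qbinom_diag: "qbinom q k k = 1"
  using qfact_pos[of k] by (simp add: qbinom_def qfact_0)

text \<open>q-Pascal rule, obtained from [k+1] = [j+1] + q^(j+1) [k-j].\<close>
lemma qbinom_pascal:
  assumes "j < k"
  shows "qbinom q (Suc k) (Suc j) = qbinom q k j + q ^ Suc j * qbinom q k (Suc j)"
proof -
  define d where "d = k - Suc j"
  have kj: "k - j = Suc d" and sk: "Suc k = Suc j + Suc d"
    using assms unfolding d_def by simp_all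
  have split: "qnum q (real (Suc k)) = qnum q (real (Suc j)) + q ^ Suc j * qnum q (real (Suc d))"
    using qnum_add[OF q_gt0, of "Suc j" "Suc d"] sk by simp
  have "qfact q j > 0" "qfact q d > 0" "qfact q k > 0"
    "qnum q (real (Suc j)) > 0" "qnum q (real (Suc d)) > 0"
    by (auto intro: qfact_pos qnum_pos)
  then show ?thesis
    unfolding qbinom_def using kj
    by (simp add: qfact_Suc d_def[symmetric] field_simps) (use split in \<open>simp add: algebra_simps\<close>)
qed

lemma qbinom_absorb:
  assumes "j \<le> k"
  shows "qbinom q (Suc k) (Suc j) * qnum q (real (Suc j)) = qnum q (real (Suc k)) * qbinom q k j"
proof -
  have "qfact q j > 0" "qfact q (k - j) > 0" "qfact q k > 0" "qnum q (real (Suc j)) > 0"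
    by (auto intro: qfact_pos qnum_pos)
  then show ?thesis
    unfolding qbinom_def qfact_Suc using assms by (simp add: field_simps)
qed

lemma qstirling_eq_numer:
  "qstirling q n k = qstirling_numer q n k / (q ^ (k choose 2) * qfact q k)"
  by (simp add: qstirling_def qstirling_numer_def divide_inverse ac_simps)

text \<open>Each summand gains the factor [k+1-i] - [k+1] = -q^(k+1-i)[i]; absorbing [i] into
  the Gaussian binomial and shifting the index yields the k-th numerator.\<close>
lemma qstirling_numer_rec:
  "qstirling_numer q (Suc n) (Suc k) = qnum q (real (Suc k)) * qstirling_numer q n (Suc k)
     + q ^ k * qnum q (real (Suc k)) * qstirling_numer q n k"
proof -
  define Q where "Q i = qnum q (real i)" for i
  define t where "t i = (-1) ^ i * q ^ (i choose 2) * qbinom q (Suc k) i" for i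
  have "qstirling_numer q (Suc n) (Suc k) - Q (Suc k) * qstirling_numer q n (Suc k)
      = (\<Sum>i=0..Suc k. t i * Q (Suc k - i) ^ n * (Q (Suc k - i) - Q (Suc k)))"
    unfolding qstirling_numer_def t_def Q_def
    by (simp add: sum_distrib_left sum_subtractf[symmetric] algebra_simps del: sum.cl_ivl_Suc)
  also have "\<dots> = (\<Sum>i=0..Suc k. - (t i * q ^ (Suc k - i) * Q i * Q (Suc k - i) ^ n))"
  proof (rule sum.cong)
    fix i assume "i \<in> {0..Suc k}"
    then have "Q (Suc k) = Q (Suc k - i) + q ^ (Suc k - i) * Q i"
      using qnum_add[OF q_gt0, of "Suc k - i" i] unfolding Q_def by simp
    then show "t i * Q (Suc k - i) ^ n * (Q (Suc k - i) - Q (Suc k))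
        = - (t i * q ^ (Suc k - i) * Q i * Q (Suc k - i) ^ n)"
      by (simp add: algebra_simps)
  qed simp
  also have "\<dots> = (\<Sum>j=0..k. - (t (Suc j) * q ^ (k - j) * Q (Suc j) * Q (k - j) ^ n))"
    by (subst sum.atLeast0_atMost_Suc_shift) (simp add: Q_def qnum_zero del: sum.cl_ivl_Suc)
  also have "\<dots> = (\<Sum>j=0..k. q ^ k * Q (Suc k)
                    * ((-1) ^ j * q ^ (j choose 2) * qbinom q k j * Q (k - j) ^ n))"
  proof (rule sum.cong)
    fix j assume "j \<in> {0..k}"
    then have jk: "j \<le> k" by simp
    have absorb: "qbinom q (Suc k) (Suc j) * Q (Suc j) = Q (Suc k) * qbinom q k j"
      using qbinom_absorb[OF jk] unfolding Q_def .
    have exponent: "q ^ ((j choose 2) + j) * q ^ (k - j) = q ^ (j choose 2) * q ^ k"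
      using jk by (simp add: power_add[symmetric])
    have "- (t (Suc j) * q ^ (k - j) * Q (Suc j) * Q (k - j) ^ n)
        = (-1) ^ j * (q ^ ((j choose 2) + j) * q ^ (k - j))
          * (qbinom q (Suc k) (Suc j) * Q (Suc j)) * Q (k - j) ^ n"
      unfolding t_def choose2_Suc by (simp add: algebra_simps)
    then show "- (t (Suc j) * q ^ (k - j) * Q (Suc j) * Q (k - j) ^ n)
        = q ^ k * Q (Suc k) * ((-1) ^ j * q ^ (j choose 2) * qbinom q k j * Q (k - j) ^ n)"
      unfolding exponent absorb by (simp add: algebra_simps)
  qed simp
  also have "\<dots> = q ^ k * Q (Suc k) * qstirling_numer q n k"
    unfolding qstirling_numer_def Q_def by (simp add: sum_distrib_left)
  finally show ?thesis
    unfolding Q_def by (simp add: algebra_simps)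
qed

text \<open>The q-binomial theorem at the point where it collapses: the alternating sum
  of q^C(i,2) binom(k+1,i) vanishes.  Proved by telescoping with the q-Pascal rule.\<close>
lemma qstirling_numer_0_Suc: "qstirling_numer q 0 (Suc k) = 0"
proof -
  define c where "c j = (-1) ^ j * q ^ (Suc j choose 2) * qbinom q k j" for j
  define f where "f j = (-1) ^ Suc j * q ^ (Suc j choose 2) * qbinom q (Suc k) (Suc j)" for j
  have numer: "qstirling_numer q 0 (Suc k) = 1 + (\<Sum>j=0..k. f j)"
    unfolding qstirling_numer_def f_def
    by (subst sum.atLeast0_atMost_Suc_shift) (simp add: qbinom_0 choose2_0 del: sum.cl_ivl_Suc)
  have step: "f j = c (Suc j) - c j" if "j < k" for j
    unfolding f_def c_def qbinom_pascal[OF that] choose2_Suc[of "Suc j"] power_add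
    by (simp add: algebra_simps)
  have last: "f k = - c k"
    unfolding f_def c_def by (simp add: qbinom_diag)
  have "(\<Sum>j=0..k. f j) = (\<Sum>j<k. f j) + f k"
    by (simp add: atLeast0AtMost lessThan_Suc_atMost[symmetric])
  also have "(\<Sum>j<k. f j) = (\<Sum>j<k. c (Suc j) - c j)"
    using step by simp
  also have "\<dots> = c k - c 0"
    by (rule sum_lessThan_telescope)
  finally have "(\<Sum>j=0..k. f j) = - c 0"
    using last by simp
  then show ?thesis
    using numer by (simp add: c_def qbinom_0 choose2_Suc choose2_0)
qed

lemma qstirling_rec:
  "qstirling q (Suc n) (Suc k) = qstirling q n k + qnum q (real (Suc k)) * qstirling q n (Suc k)"
proof -
  have "qfact q k > 0" "qnum q (real (Suc k)) > 0" "q ^ (k choose 2) > 0" "q ^ k > 0"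
    using q_gt0 by (auto intro: qfact_pos qnum_pos)
  then show ?thesis
    using q_gt0 unfolding qstirling_eq_numer qstirling_numer_rec qfact_Suc choose2_Suc power_add
    by (simp add: add_divide_distrib ac_simps)
qed

lemma qstirling_0_0: "qstirling q 0 0 = 1"
  by (simp add: qstirling_eq_numer qstirling_numer_def qbinom_0 choose2_0 qfact_0)

lemma qstirling_Suc_0: "qstirling q (Suc n) 0 = 0"
  by (simp add: qstirling_eq_numer qstirling_numer_def qnum_zero)

lemma qstirling_vanish: "n < k \<Longrightarrow> qstirling q n k = 0"
proof (induction n arbitrary: k)
  case 0
  then obtain k' where "k = Suc k'" by (cases k) auto
  then show ?case by (simp add: qstirling_eq_numer qstirling_numer_0_Suc)
next
  case (Suc n)
  then obtain k' where "k = Suc k'" by (cases k) auto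
  then show ?case using Suc by (simp add: qstirling_rec)
qed

lemma qfalling_prod: "qfalling q x k = q ^ (k choose 2) * (\<Prod>i\<in>{0..<k}. qnum q (x - real i))"
  using qfact_pos[of k] by (simp add: qfalling_def qbinom_real_def)

text \<open>Multiplication by [x] in the falling-factorial basis, via [x] = [k] + q^k [x-k].\<close>
lemma qfalling_mult:
  "qnum q x * qfalling q x k = qnum q (real k) * qfalling q x k + qfalling q x (Suc k)"
proof -
  define F where "F = (\<Prod>i\<in>{0..<k}. qnum q (x - real i))"
  have "qfalling q x (Suc k) = q ^ (k choose 2) * q ^ k * F * qnum q (x - real k)"
    unfolding qfalling_prod F_def choose2_Suc power_add by simp
  moreover have "qfalling q x k = q ^ (k choose 2) * F"
    unfolding qfalling_prod F_def ..
  ultimately show ?thesis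
    using qnum_shift[OF q_gt0, of x k] by (simp add: algebra_simps)
qed

text \<open>q-analogue of x^n = sum_k S(n,k) x(x-1)...(x-k+1).\<close>
lemma qpower_expansion: "qnum q x ^ n = (\<Sum>k=0..n. qfalling q x k * qstirling q n k)"
proof (induction n)
  case 0
  then show ?case
    by (simp add: qstirling_0_0 qfalling_def qbinom_real_def qfact_0 choose2_0)
next
  case (Suc n)
  define S where "S = qstirling q n"
  define P where "P = qfalling q x"
  define g where "g k = qnum q (real k) * P k * S k" for k
  have g_shift: "(\<Sum>k=0..n. g k) = (\<Sum>k=0..n. g (Suc k))"
  proof -
    have "(\<Sum>k=0..Suc n. g k) = g 0 + (\<Sum>k=0..n. g (Suc k))"
      by (subst sum.atLeast0_atMost_Suc_shift) simp
    moreover have "g 0 = 0" "g (Suc n) = 0"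
      by (simp_all add: g_def S_def qnum_zero qstirling_vanish)
    ultimately show ?thesis by simp
  qed
  have "qnum q x ^ Suc n = (\<Sum>k=0..n. (qnum q x * P k) * S k)"
    using Suc by (simp add: P_def S_def sum_distrib_left mult.assoc)
  also have "\<dots> = (\<Sum>k=0..n. g k) + (\<Sum>k=0..n. P (Suc k) * S k)"
    unfolding P_def qfalling_mult
    by (simp add: g_def P_def sum.distrib algebra_simps del: sum.cl_ivl_Suc)
  also have "\<dots> = (\<Sum>k=0..n. P (Suc k) * qstirling q (Suc n) (Suc k))"
    unfolding g_shift
    by (simp add: g_def S_def qstirling_rec sum.distrib[symmetric] algebra_simps
             del: sum.cl_ivl_Suc)
  also have "\<dots> = (\<Sum>k=0..Suc n. P k * qstirling q (Suc n) k)"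
    by (simp only: sum.atLeast0_atMost_Suc_shift) (simp add: qstirling_Suc_0 del: sum.cl_ivl_Suc)
  finally show ?case
    unfolding P_def .
qed

end

text \<open>Moment identity for the (unnormalised) Bernstein basis in arbitrary a, b:
  C(n,k) C(k,l) = C(n,l) C(n-l,k-l) followed by the binomial theorem.\<close>
lemma bernstein_moment:
  fixes a b :: real
  assumes "l \<le> n"
  shows "(\<Sum>k=l..n. real (k choose l) / real (n choose l) * (real (n choose k) * a ^ k * b ^ (n - k)))
         = a ^ l * (a + b) ^ (n - l)"
proof -
  have pos: "real (n choose l) > 0"
    using assms by simp
  have "(\<Sum>k=l..n. real (k choose l) / real (n choose l) * (real (n choose k) * a ^ k * b ^ (n - k)))
      = (\<Sum>k=l..n. real ((n - l) choose (k - l)) * a ^ k * b ^ (n - k))"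
  proof (rule sum.cong)
    fix k assume "k \<in> {l..n}"
    then have "real (n choose k) * real (k choose l) = real (n choose l) * real ((n - l) choose (k - l))"
      by (simp add: choose_mult flip: of_nat_mult)
    then show "real (k choose l) / real (n choose l) * (real (n choose k) * a ^ k * b ^ (n - k))
        = real ((n - l) choose (k - l)) * a ^ k * b ^ (n - k)"
      using pos by (simp add: field_simps)
  qed simp
  also have "\<dots> = (\<Sum>i=0..n - l. real ((n - l) choose i) * a ^ (i + l) * b ^ (n - l - i))"
  proof -
    have "{l..n} = {0 + l..(n - l) + l}"
      using assms by simp
    then show ?thesis
      by (simp only: sum.shift_bounds_cl_nat_ivl) (simp add: diff_diff_left add.commute)
  qed
  also have "\<dots> = a ^ l * (\<Sum>i=0..n - l. real ((n - l) choose i) * a ^ i * b ^ (n - l - i))"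
    by (simp add: sum_distrib_left power_add algebra_simps)
  also have "\<dots> = a ^ l * (a + b) ^ (n - l)"
    by (simp add: binomial_ring atLeast0AtMost)
  finally show ?thesis .
qed

theorem theorem11:
  fixes q x y :: real and n m l :: nat
  assumes "0 < q" "q < 1"
    and "l \<le> n" "l \<le> m"
    and "0 \<le> x" "x \<le> 1" "0 \<le> y" "y \<le> 1"
  shows "1 / ((qnum q x + qnum q (1 - x)) ^ (n - l) * (qnum q y + qnum q (1 - y)) ^ (m - l))
           * (\<Sum>k=l..n. \<Sum>j=l..m.
                real (k choose l) * real (j choose l) / (real (n choose l) * real (m choose l))
                * qbernstein2 q (int k) (int j) (int n) (int m) x y)
         = (\<Sum>k=0..l. \<Sum>j=0..l.
              q ^ ((k choose 2) + (j choose 2)) * qbinom_real q x k * qbinom_real q y j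
              * qfact q k * qfact q j * qstirling q l k * qstirling q l j)"
proof -
  define B where "B z N K = real (K choose l) / real (N choose l)
                    * (real (N choose K) * qnum q z ^ K * qnum q (1 - z) ^ (N - K))" for z N K
  text \<open>The two-variable basis is a product of one-variable ones, so both sides factor.\<close>
  have lhs: "(\<Sum>k=l..n. \<Sum>j=l..m.
                real (k choose l) * real (j choose l) / (real (n choose l) * real (m choose l))
                * qbernstein2 q (int k) (int j) (int n) (int m) x y)
     = (\<Sum>k=l..n. B x n k) * (\<Sum>j=l..m. B y m j)"
    unfolding sum_product B_def
    by (intro sum.cong refl) (auto simp: qbernstein2_def nat_diff_distrib)
  have rhs: "(\<Sum>k=0..l. \<Sum>j=0..l.
              q ^ ((k choose 2) + (j choose 2)) * qbinom_real q x k * qbinom_real q y j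
              * qfact q k * qfact q j * qstirling q l k * qstirling q l j)
     = (\<Sum>k=0..l. qfalling q x k * qstirling q l k) * (\<Sum>j=0..l. qfalling q y j * qstirling q l j)"
    unfolding sum_product by (intro sum.cong refl) (simp add: qfalling_def power_add algebra_simps)
  have "0 < qnum q x + qnum q (1 - x)" "0 < qnum q y + qnum q (1 - y)"
    using assms qnum_sum_pos by auto
  then show ?thesis
    unfolding lhs rhs B_def bernstein_moment[OF assms(3)] bernstein_moment[OF assms(4)]
      qpower_expansion[OF assms(1,2), symmetric]
    by (simp add: field_simps)
qed

end
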